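(* Let $K \subset \mathbb R^3$ be a regular convex cone whose boundary is of class $C^k$, $k \geq 5$, and positively curved, and let $\gamma \subset \mathbb{RP}^2$ be the projective image of $\partial K$. Let $\alpha,\beta$ be $2\pi$-periodic real functions of class $C^{k-4}$, $C^{k-5}$ respectively, and let $y:\mathbb R \to \mathbb R^3$ be a $2\pi$-periodic solution of \[ y''' + 2\alpha y' + \alpha' y + \beta y = 0 \] such that $\det(y'',y',y) \equiv 1$, the projective image of $y$ is $\gamma$, and $y(t)$ makes exactly one turn around $K$ along $\partial K$ as $t$ runs over one period. Set $Y = (y''+\alpha y, y', y)$ (a $3\times 3$ matrix with these columns). Let $K^*$ be the dual cone of $K$ and $\gamma^*$ the projective image of $\partial K^*$ (the dual projective curve of $\gamma$). Then there exists a vector-valued solution $z:\mathbb R\to\mathbb R^3$ of the adjoint equation \[ z''' + 2\alpha z' + \alpha' z - \beta z = 0 \] which is a lift of $\gamma^*$ and satisfies $\det(z'',z',z) \equiv 1$, and the matrix $Z = (z''+\alpha z, z', z) \in SL(3,\mathbb R)$ is given by $Z = Y^{-T}Q$, where \[ Q = \begin{pmatrix} 0 & 0 & 1 \\ 0 & -1 & 0 \\ 1 & 0 & 0 \end{pmatrix}. \]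
   Context: A regular convex cone is a closed convex cone with non-empty interior containing no lines. The dual cone $K^*$ is the set of linear functionals nonnegative on $K$, identified with vectors in $\mathbb R^3$ via the standard inner product. "Positively curved boundary" means the boundary $\partial K\setminus\{0\}$ has everywhere positive curvature (in the directions transverse to the rays), so that its projective image $\gamma$ is a simple closed strictly convex curve without inflection points. A lift of a curve in $\mathbb{RP}^2$ is a curve in $\mathbb R^3\setminus\{0\}$ whose projective image is the given curve (pointwise in the parameter; here $z(t)$ projects to the point of $\gamma^*$ corresponding to the tangent line of $\gamma$ at the projective image of $y(t)$). *)

theory Defs
  imports "HOL-Analysis.Analysis"
begin

definition vderiv :: "(real \<Rightarrow> 'a::real_normed_vector) \<Rightarrow> real \<Rightarrow> 'a" where
  "vderiv f = (\<lambda>t. vector_derivative f (at t))"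

definition Ck_fun :: "nat \<Rightarrow> (real \<Rightarrow> 'a::real_normed_vector) \<Rightarrow> bool" where
  "Ck_fun n f \<longleftrightarrow> (\<forall>j<n. \<forall>t. (vderiv ^^ j) f differentiable at t)
                    \<and> continuous_on UNIV ((vderiv ^^ n) f)"

definition cols3 :: "real^3 \<Rightarrow> real^3 \<Rightarrow> real^3 \<Rightarrow> real^3^3" where
  "cols3 a b c = transpose (vector [a, b, c])"

(* point of RP^2 represented by x (a 1-dimensional subspace when x \<noteq> 0) *)
definition proj :: "real^3 \<Rightarrow> (real^3) set" where
  "proj x = span {x}"

definition regular_convex_cone :: "(real^3) set \<Rightarrow> bool" where
  "regular_convex_cone K \<longleftrightarrow> closed K \<and> convex K \<and> cone K \<and> interior K \<noteq> {}
     \<and> \<not> (\<exists>a v. v \<noteq> 0 \<and> (\<forall>s::real. a + s *\<^sub>R v \<in> K))"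

definition dual_cone :: "(real^3) set \<Rightarrow> (real^3) set" where
  "dual_cone K = {w. \<forall>x\<in>K. 0 \<le> w \<bullet> x}"

definition proj_image :: "(real^3) set \<Rightarrow> (real^3) set set" where
  "proj_image K = proj ` (frontier K - {0})"

(* \<partial>K \<setminus> {0} is a C^k surface with positive curvature transverse to the rays:
   near each of its points it is the union of the open rays through a regular
   C^k curve c without inflection points, i.e. det(c, c', c'') \<noteq> 0. *)
definition posc_Ck_boundary :: "nat \<Rightarrow> (real^3) set \<Rightarrow> bool" where
  "posc_Ck_boundary k K \<longleftrightarrow>
     (\<forall>p \<in> frontier K - {0}. \<exists>c U \<epsilon>. 0 < \<epsilon> \<and> open U \<and> p \<in> U \<and> Ck_fun k c \<and> c 0 = p
        \<and> (\<forall>u. det (cols3 (c u) (vderiv c u) (vderiv (vderiv c) u)) \<noteq> 0)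
        \<and> frontier K \<inter> U = U \<inter> {r *\<^sub>R c u | r u. 0 < r \<and> u \<in> {-\<epsilon><..<\<epsilon>}})"

(* the point of \<gamma>* corresponding to the tangent (= supporting) line of \<gamma> at the
   projective point of p \<in> \<partial>K \<setminus> {0}: the ray of K* annihilating the tangent plane *)
definition dual_point :: "(real^3) set \<Rightarrow> real^3 \<Rightarrow> (real^3) set set" where
  "dual_point K p = {proj w | w. w \<in> dual_cone K \<and> w \<noteq> 0 \<and> w \<bullet> p = 0}"

definition Qmat :: "real^3^3" where
  "Qmat = vector [vector [0, 0, 1], vector [0, -1, 0], vector [1, 0, 0]]"

end

theory Submission
  imports Defs
begin

(* The dual lift is z = y' \<times> y. Differentiating twice and using the equation for y gives
   z' = y'' \<times> y and z'' = y'' \<times> y' - 2 \<alpha> z, and a third differentiation turns the equation for y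
   into the adjoint equation for z. The columns of Z = (z'' + \<alpha> z, z', z) are cross products of the
   columns of Y = (y'' + \<alpha> y, y', y), so Y^T Z = det (y'', y', y) Q = Q, which gives Z = Y^-T Q and
   det Z = 1. Geometrically, a supporting functional w of K at y(t) annihilates y(t), and also y'(t)
   because w \<bullet> y \<ge> 0 attains its minimum 0 at t; hence w is a nonzero multiple of z(t), and w lies
   on the boundary of K* since it vanishes on y(t) \<in> K. *)

unbundle cross3_syntax

lemma cols3_nth:
  "cols3 a b c $ i $ j = (if j = 1 then a $ i else if j = 2 then b $ i else c $ i)"
  unfolding cols3_def transpose_def using exhaust_3[of j] by (auto simp: vector_3)

lemma det_cols3:
  "det (cols3 a b c) = a$1 * b$2 * c$3 - a$1 * b$3 * c$2 - a$2 * b$1 * c$3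
                      + a$2 * b$3 * c$1 + a$3 * b$1 * c$2 - a$3 * b$2 * c$1"
  by (simp add: det_3 cols3_nth algebra_simps)

lemma det_cols3_add_scaled_col3: "det (cols3 (a + l *\<^sub>R c) b c) = det (cols3 a b c)"
  by (simp add: det_cols3 algebra_simps)

lemma Qmat_nth:
  "Qmat $ i $ j = (if i = 1 \<and> j = 3 \<or> i = 3 \<and> j = 1 then 1 else if i = 2 \<and> j = 2 then -1 else 0)"
  unfolding Qmat_def using exhaust_3[of j] exhaust_3[of i] by (auto simp: vector_3)

lemma Qmat_mult_Qmat: "Qmat ** Qmat = mat 1"
  unfolding vec_eq_iff forall_3 by (simp add: matrix_matrix_mult_def sum_3 Qmat_nth mat_def)

lemma det_Qmat: "det Qmat = 1"
  by (simp add: det_3 Qmat_nth)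

lemma transpose_cols3_mult_cross_cols3:
  "transpose (cols3 (a + l *\<^sub>R c) b c) ** cols3 (a \<times> b - l *\<^sub>R (b \<times> c)) (a \<times> c) (b \<times> c)
     = det (cols3 a b c) *\<^sub>R Qmat"
  unfolding vec_eq_iff forall_3
  by (simp add: matrix_matrix_mult_def sum_3 cols3_nth Qmat_nth transpose_def cross3_def det_cols3 algebra_simps)

lemma matrix_inv_unique:
  fixes A B :: "'a::field^'n^'n"
  assumes "A ** B = mat 1"
  shows "matrix_inv A = B"
proof -
  have "B ** A = mat 1" using assms matrix_left_right_inverse by blast
  then have inv: "matrix_inv A ** A = mat 1"
    unfolding matrix_inv_def using assms by (metis (mono_tags, lifting) someI)
  have "matrix_inv A = matrix_inv A ** (A ** B)" by (simp add: assms matrix_mul_rid)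
  also have "\<dots> = B" using inv by (simp add: matrix_mul_assoc matrix_mul_lid)
  finally show ?thesis .
qed

lemma eq_transpose_matrix_inv_mult:
  fixes Y Z Q :: "'a::field^'n^'n"
  assumes "transpose Y ** Z = Q" and "Q ** Q = mat 1"
  shows "Z = transpose (matrix_inv Y) ** Q"
proof -
  have "transpose (Z ** Q) ** Y = mat 1"
    using assms by (metis matrix_mul_assoc matrix_transpose_mul transpose_mat transpose_transpose)
  then have "Y ** transpose (Z ** Q) = mat 1" using matrix_left_right_inverse by blast
  then have "transpose (matrix_inv Y) = Z ** Q" by (simp add: matrix_inv_unique)
  then show ?thesis using assms(2) by (metis matrix_mul_assoc matrix_mul_rid)
qed

lemma cross_frame_eq_transpose_inverse:
  fixes a b c :: "real^3" and l :: real
  assumes "det (cols3 a b c) = 1"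
  defines "Y \<equiv> cols3 (a + l *\<^sub>R c) b c"
    and "Z \<equiv> cols3 (a \<times> b - l *\<^sub>R (b \<times> c)) (a \<times> c) (b \<times> c)"
  shows "det Z = 1" and "Z = transpose (matrix_inv Y) ** Qmat"
proof -
  have YZ: "transpose Y ** Z = Qmat"
    using transpose_cols3_mult_cross_cols3[of a l c b] assms by simp
  then have "det Y * det Z = 1" using det_mul[of "transpose Y" Z] det_Qmat by simp
  then show "det Z = 1" using assms det_cols3_add_scaled_col3 by simp
  show "Z = transpose (matrix_inv Y) ** Qmat"
    using eq_transpose_matrix_inv_mult[OF YZ Qmat_mult_Qmat] .
qed

lemma vderiv_eqI:
  assumes "\<And>t. (f has_vector_derivative f' t) (at t)"
  shows "vderiv f = f'"
  using assms vector_derivative_at unfolding vderiv_def by blast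

lemma vderiv_iterates_differentiable_iff:
  "(\<forall>j<3. \<forall>t. (vderiv ^^ j) f differentiable at t) \<longleftrightarrow>
     (\<forall>t. (f has_vector_derivative vderiv f t) (at t)
        \<and> (vderiv f has_vector_derivative vderiv (vderiv f) t) (at t)
        \<and> (vderiv (vderiv f) has_vector_derivative vderiv (vderiv (vderiv f)) t) (at t))"
proof -
  have "j < 3 \<longleftrightarrow> j = 0 \<or> j = 1 \<or> j = (2::nat)" for j by auto
  then show ?thesis
    by (simp add: vderiv_def vector_derivative_works[symmetric] numeral_2_eq_2 all_conj_distrib)
qed

lemma has_vector_derivative_cross:
  assumes "(f has_vector_derivative f') (at t)" and "(g has_vector_derivative g') (at t)"
  shows "((\<lambda>s. f s \<times> g s) has_vector_derivative f t \<times> g' + f' \<times> g t) (at t)"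
proof -
  have "bounded_bilinear cross3"
    using bilinear_cross bilinear_conv_bounded_bilinear by blast
  from bounded_bilinear.has_vector_derivative[OF this assms] show ?thesis .
qed

lemma cross_derivatives_of_ode_solution:
  fixes y y1 y2 y3 :: "real \<Rightarrow> real^3"
  assumes Dy: "\<And>t. (y has_vector_derivative y1 t) (at t)"
    and Dy1: "\<And>t. (y1 has_vector_derivative y2 t) (at t)"
    and Dy2: "\<And>t. (y2 has_vector_derivative y3 t) (at t)"
    and D\<alpha>: "\<And>t. (\<alpha> has_real_derivative \<alpha>1 t) (at t)"
    and ode: "\<And>t. y3 t + (2 * \<alpha> t) *\<^sub>R y1 t + \<alpha>1 t *\<^sub>R y t + \<beta> t *\<^sub>R y t = 0"
  defines "z \<equiv> \<lambda>t. y1 t \<times> y t"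
  shows "(z has_vector_derivative y2 t \<times> y t) (at t)"
    and "((\<lambda>t. y2 t \<times> y t) has_vector_derivative y2 t \<times> y1 t - (2 * \<alpha> t) *\<^sub>R z t) (at t)"
    and "((\<lambda>t. y2 t \<times> y1 t - (2 * \<alpha> t) *\<^sub>R z t) has_vector_derivative
           \<beta> t *\<^sub>R z t - \<alpha>1 t *\<^sub>R z t - (2 * \<alpha> t) *\<^sub>R (y2 t \<times> y t)) (at t)"
proof -
  have y3: "y3 t = - ((2 * \<alpha> t) *\<^sub>R y1 t + (\<alpha>1 t + \<beta> t) *\<^sub>R y t)" for t
    using ode[of t] by (simp add: algebra_simps eq_neg_iff_add_eq_0)
  have y3_y: "y3 t \<times> y t = - ((2 * \<alpha> t) *\<^sub>R z t)"
    and y3_y1: "y3 t \<times> y1 t = (\<alpha>1 t + \<beta> t) *\<^sub>R z t" for t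
    unfolding y3 z_def by (simp_all add: cross3_simps)
  show "(z has_vector_derivative y2 t \<times> y t) (at t)"
    using has_vector_derivative_cross[OF Dy1 Dy] unfolding z_def by simp
  show "((\<lambda>t. y2 t \<times> y t) has_vector_derivative y2 t \<times> y1 t - (2 * \<alpha> t) *\<^sub>R z t) (at t)"
    using has_vector_derivative_cross[OF Dy2 Dy, of t] by (simp add: y3_y)
  have "((\<lambda>t. y2 t \<times> y1 t) has_vector_derivative (\<alpha>1 t + \<beta> t) *\<^sub>R z t) (at t)"
    using has_vector_derivative_cross[OF Dy2 Dy1, of t] by (simp add: y3_y1)
  moreover have "((\<lambda>t. (2 * \<alpha> t) *\<^sub>R z t) has_vector_derivative
                   (2 * \<alpha> t) *\<^sub>R (y2 t \<times> y t) + (2 * \<alpha>1 t) *\<^sub>R z t) (at t)"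
    using has_vector_derivative_scaleR[OF DERIV_cmult[OF D\<alpha>] \<open>(z has_vector_derivative _) _\<close>] .
  ultimately show "((\<lambda>t. y2 t \<times> y1 t - (2 * \<alpha> t) *\<^sub>R z t) has_vector_derivative
           \<beta> t *\<^sub>R z t - \<alpha>1 t *\<^sub>R z t - (2 * \<alpha> t) *\<^sub>R (y2 t \<times> y t)) (at t)"
    by (rule has_vector_derivative_diff[THEN has_vector_derivative_eq_rhs])
      (simp add: vec_eq_iff algebra_simps)
qed

lemma cross_solves_adjoint_equation:
  fixes y :: "real \<Rightarrow> real^3"
  assumes ydiff: "\<forall>j<3. \<forall>t. (vderiv ^^ j) y differentiable at t"
    and \<alpha>diff: "\<And>t. \<alpha> differentiable at t"
    and ode: "\<forall>t. vderiv (vderiv (vderiv y)) t + (2 * \<alpha> t) *\<^sub>R vderiv y t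
                   + vderiv \<alpha> t *\<^sub>R y t + \<beta> t *\<^sub>R y t = 0"
    and z_def: "z = (\<lambda>t. vderiv y t \<times> y t)"
  shows "\<forall>j<3. \<forall>t. (vderiv ^^ j) z differentiable at t"
    and "\<forall>t. vderiv (vderiv (vderiv z)) t + (2 * \<alpha> t) *\<^sub>R vderiv z t
               + vderiv \<alpha> t *\<^sub>R z t - \<beta> t *\<^sub>R z t = 0"
    and "vderiv z = (\<lambda>t. vderiv (vderiv y) t \<times> y t)"
    and "vderiv (vderiv z) = (\<lambda>t. vderiv (vderiv y) t \<times> vderiv y t - (2 * \<alpha> t) *\<^sub>R z t)"
proof -
  have D\<alpha>: "(\<alpha> has_real_derivative vderiv \<alpha> t) (at t)" for t
    using \<alpha>diff vector_derivative_works
    unfolding vderiv_def has_real_derivative_iff_has_vector_derivative by blast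
  have Dy: "(y has_vector_derivative vderiv y t) (at t)"
    and Dy1: "(vderiv y has_vector_derivative vderiv (vderiv y) t) (at t)"
    and Dy2: "(vderiv (vderiv y) has_vector_derivative vderiv (vderiv (vderiv y)) t) (at t)" for t
    using ydiff unfolding vderiv_iterates_differentiable_iff by blast+
  define z1 where "z1 t = vderiv (vderiv y) t \<times> y t" for t
  define z2 where "z2 t = vderiv (vderiv y) t \<times> vderiv y t - (2 * \<alpha> t) *\<^sub>R z t" for t
  define z3 where "z3 t = \<beta> t *\<^sub>R z t - vderiv \<alpha> t *\<^sub>R z t - (2 * \<alpha> t) *\<^sub>R z1 t" for t
  have Dz: "(z has_vector_derivative z1 t) (at t)" "(z1 has_vector_derivative z2 t) (at t)"
    "(z2 has_vector_derivative z3 t) (at t)" for t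
    using cross_derivatives_of_ode_solution[OF Dy Dy1 Dy2 D\<alpha> ode[rule_format]]
    unfolding z_def z1_def[abs_def] z2_def[abs_def] z3_def by simp_all
  have vz: "vderiv z = z1" "vderiv z1 = z2" "vderiv z2 = z3"
    using Dz by (simp_all add: vderiv_eqI)
  show "\<forall>j<3. \<forall>t. (vderiv ^^ j) z differentiable at t"
    unfolding vderiv_iterates_differentiable_iff vz using Dz by simp
  show "vderiv z = (\<lambda>t. vderiv (vderiv y) t \<times> y t)"
    and "vderiv (vderiv z) = (\<lambda>t. vderiv (vderiv y) t \<times> vderiv y t - (2 * \<alpha> t) *\<^sub>R z t)"
    using vz unfolding z1_def[abs_def] z2_def[abs_def] by simp_all
  show "\<forall>t. vderiv (vderiv (vderiv z)) t + (2 * \<alpha> t) *\<^sub>R vderiv z t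
               + vderiv \<alpha> t *\<^sub>R z t - \<beta> t *\<^sub>R z t = 0"
    using vz by (simp add: z3_def algebra_simps)
qed

lemma cone_frontier_supporting_functional:
  fixes K :: "(real^3) set"
  assumes "closed K" "convex K" "cone K" "interior K \<noteq> {}" "p \<in> frontier K"
  obtains w where "w \<noteq> 0" "w \<in> dual_cone K" "w \<bullet> p = 0"
proof -
  have pK: "p \<in> K" using assms(1,5) frontier_subset_closed by blast
  then have "p \<in> closure K" using closure_subset by blast
  have "p \<notin> interior K" using assms(5) by (simp add: frontier_def)
  then have "p \<notin> rel_interior K" using rel_interior_nonempty_interior[OF assms(4)] by simp
  with supporting_hyperplane_relative_frontier[OF assms(2) \<open>p \<in> closure K\<close>]
  obtain w where "w \<noteq> 0" and w_closure: "\<And>v. v \<in> closure K \<Longrightarrow> w \<bullet> p \<le> w \<bullet> v"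
    by metis
  have w: "w \<bullet> p \<le> w \<bullet> v" if "v \<in> K" for v using w_closure closure_subset that by blast
  have "0 \<in> K" using cone_contains_0[OF assms(3)] pK by blast
  then have "w \<bullet> p \<le> 0" using w[of 0] by simp
  moreover have "2 *\<^sub>R p \<in> K" using assms(3) pK unfolding cone_def by simp
  then have "w \<bullet> p \<le> 2 * (w \<bullet> p)" using w[of "2 *\<^sub>R p"] by simp
  ultimately have "w \<bullet> p = 0" by linarith
  with w have "w \<in> dual_cone K" unfolding dual_cone_def by simp
  with \<open>w \<noteq> 0\<close> \<open>w \<bullet> p = 0\<close> show thesis using that by blast
qed

lemma dual_cone_frontierI:
  fixes K :: "(real^3) set"
  assumes "w \<in> dual_cone K" "p \<in> K" "p \<noteq> 0" "w \<bullet> p = 0"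
  shows "w \<in> frontier (dual_cone K)"
proof -
  have "w \<notin> interior (dual_cone K)"
  proof
    assume "w \<in> interior (dual_cone K)"
    then obtain e where "e > 0" and e: "ball w e \<subseteq> dual_cone K" by (metis mem_interior)
    define d where "d = e / (2 * norm p)"
    have "d > 0" using \<open>e > 0\<close> assms(3) by (simp add: d_def)
    have "dist w (w - d *\<^sub>R p) < e" using \<open>d > 0\<close> \<open>e > 0\<close> assms(3) by (simp add: dist_norm d_def)
    then have "w - d *\<^sub>R p \<in> dual_cone K" using e by (meson mem_ball subsetD)
    then have "0 \<le> (w - d *\<^sub>R p) \<bullet> p" using assms(2) unfolding dual_cone_def by blast
    also have "\<dots> = - d * (p \<bullet> p)" using assms(4) by (simp add: inner_diff_left)
    finally have "0 \<le> - d * (p \<bullet> p)" .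
    moreover have "0 < d * (p \<bullet> p)" using \<open>d > 0\<close> assms(3) by simp
    ultimately show False by linarith
  qed
  then show ?thesis unfolding frontier_def using assms(1) closure_subset by blast
qed

lemma vector_derivative_inner_eq_0_at_min:
  fixes y :: "real \<Rightarrow> 'a::real_inner"
  assumes "\<And>s. w \<bullet> y t \<le> w \<bullet> y s" and "(y has_vector_derivative y') (at t)"
  shows "w \<bullet> y' = 0"
proof -
  have "((\<lambda>s. w \<bullet> y s) has_real_derivative w \<bullet> y') (at t)"
    using bounded_linear.has_vector_derivative[OF bounded_linear_inner_right assms(2)]
    unfolding has_real_derivative_iff_has_vector_derivative by simp
  from DERIV_local_min[OF this zero_less_one] show ?thesis using assms(1) by blast
qed

lemma cross_cross_left: "(a \<times> b) \<times> w = (a \<bullet> w) *\<^sub>R b - (b \<bullet> w) *\<^sub>R a"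
  unfolding vec_eq_iff forall_3 by (simp add: cross3_def inner_vec_def sum_3 algebra_simps)

lemma orthogonal_imp_multiple_cross:
  assumes "w \<bullet> a = 0" "w \<bullet> b = 0" "a \<times> b \<noteq> 0"
  obtains c where "w = c *\<^sub>R (a \<times> b)"
proof -
  have "(a \<times> b) \<times> w = 0" using assms by (simp add: cross_cross_left inner_commute)
  then have "collinear {0, a \<times> b, w}" by (simp add: cross_eq_0)
  then show thesis using that assms(3) collinear_lemma by (metis scaleR_zero_left)
qed

lemma proj_scaleR: "c \<noteq> 0 \<Longrightarrow> proj (c *\<^sub>R x) = proj x"
  unfolding proj_def using span_image_scale[of "{x}" "\<lambda>_. c"] by simp

lemma cross_tangent_in_dual_point:
  fixes K :: "(real^3) set" and y :: "real \<Rightarrow> real^3"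
  assumes K: "closed K" "convex K" "cone K" "interior K \<noteq> {}"
    and y: "\<And>s. y s \<in> frontier K" and y': "(y has_vector_derivative y') (at t)"
    and nz: "y' \<times> y t \<noteq> 0"
  shows "proj (y' \<times> y t) \<in> proj_image (dual_cone K)" "proj (y' \<times> y t) \<in> dual_point K (y t)"
proof -
  obtain w where "w \<noteq> 0" and w: "w \<in> dual_cone K" and wy: "w \<bullet> y t = 0"
    using cone_frontier_supporting_functional[OF K y] .
  have yK: "y s \<in> K" for s using y K(1) frontier_subset_closed by blast
  have "w \<bullet> y' = 0"
    using vector_derivative_inner_eq_0_at_min[OF _ y'] w yK wy unfolding dual_cone_def by simp
  then obtain c where wc: "w = c *\<^sub>R (y' \<times> y t)"
    using orthogonal_imp_multiple_cross wy nz by blast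
  with \<open>w \<noteq> 0\<close> have pw: "proj w = proj (y' \<times> y t)" by (simp add: proj_scaleR)
  have "y t \<noteq> 0" using nz by auto
  then have "w \<in> frontier (dual_cone K) - {0}" using dual_cone_frontierI w yK wy \<open>w \<noteq> 0\<close> by blast
  then show "proj (y' \<times> y t) \<in> proj_image (dual_cone K)"
    unfolding proj_image_def pw[symmetric] by blast
  show "proj (y' \<times> y t) \<in> dual_point K (y t)"
    unfolding dual_point_def pw[symmetric] using w wy \<open>w \<noteq> 0\<close> by (auto simp: inner_commute)
qed

theorem lemma2:
  fixes K :: "(real^3) set" and k :: nat
    and \<alpha> \<beta> :: "real \<Rightarrow> real" and y :: "real \<Rightarrow> real^3"
  assumes cone: "regular_convex_cone K"
    and k: "5 \<le> k"
    and bdry: "posc_Ck_boundary k K"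
    and \<alpha>: "Ck_fun (k - 4) \<alpha>" "\<forall>t. \<alpha> (t + 2 * pi) = \<alpha> t"
    and \<beta>: "Ck_fun (k - 5) \<beta>" "\<forall>t. \<beta> (t + 2 * pi) = \<beta> t"
    and ydiff: "\<forall>j<3. \<forall>t. (vderiv ^^ j) y differentiable at t"
    and yper: "\<forall>t. y (t + 2 * pi) = y t"
    and yode: "\<forall>t. vderiv (vderiv (vderiv y)) t + (2 * \<alpha> t) *\<^sub>R vderiv y t
                   + vderiv \<alpha> t *\<^sub>R y t + \<beta> t *\<^sub>R y t = 0"
    and ydet: "\<forall>t. det (cols3 (vderiv (vderiv y) t) (vderiv y t) (y t)) = 1"
    and yimg: "proj ` range y = proj_image K"
    and yturn: "\<forall>t. y t \<in> frontier K" "inj_on (\<lambda>t. proj (y t)) {0..<2 * pi}"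
  shows "\<exists>z :: real \<Rightarrow> real^3.
           (\<forall>j<3. \<forall>t. (vderiv ^^ j) z differentiable at t)
         \<and> (\<forall>t. vderiv (vderiv (vderiv z)) t + (2 * \<alpha> t) *\<^sub>R vderiv z t
                 + vderiv \<alpha> t *\<^sub>R z t - \<beta> t *\<^sub>R z t = 0)
         \<and> (\<forall>t. z t \<noteq> 0 \<and> proj (z t) \<in> proj_image (dual_cone K)
                 \<and> proj (z t) \<in> dual_point K (y t))
         \<and> (\<forall>t. det (cols3 (vderiv (vderiv z) t) (vderiv z t) (z t)) = 1)
         \<and> (\<forall>t. let Y = cols3 (vderiv (vderiv y) t + \<alpha> t *\<^sub>R y t) (vderiv y t) (y t);
                    Z = cols3 (vderiv (vderiv z) t + \<alpha> t *\<^sub>R z t) (vderiv z t) (z t)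
                in det Z = 1 \<and> Z = transpose (matrix_inv Y) ** Qmat)"
proof -
  have K: "closed K" "convex K" "cone K" "interior K \<noteq> {}"
    using cone unfolding regular_convex_cone_def by auto
  have "0 < k - 4" using k by simp
  then have \<alpha>_diff: "\<alpha> differentiable at t" for t
    using \<alpha>(1) unfolding Ck_fun_def by (metis funpow_0)
  define z where "z = (\<lambda>t. vderiv y t \<times> y t)"
  note z = cross_solves_adjoint_equation[OF ydiff \<alpha>_diff yode z_def]
  have Dy: "(y has_vector_derivative vderiv y t) (at t)" for t
    using ydiff unfolding vderiv_iterates_differentiable_iff by blast
  have Z: "cols3 (vderiv (vderiv z) t + \<alpha> t *\<^sub>R z t) (vderiv z t) (z t) =
      cols3 (vderiv (vderiv y) t \<times> vderiv y t - \<alpha> t *\<^sub>R (vderiv y t \<times> y t))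
            (vderiv (vderiv y) t \<times> y t) (vderiv y t \<times> y t)" for t
    using z(3,4) unfolding z_def by (simp add: vec_eq_iff cols3_nth algebra_simps)
  have frame: "det (cols3 (vderiv (vderiv z) t + \<alpha> t *\<^sub>R z t) (vderiv z t) (z t)) = 1"
    "cols3 (vderiv (vderiv z) t + \<alpha> t *\<^sub>R z t) (vderiv z t) (z t) =
       transpose (matrix_inv (cols3 (vderiv (vderiv y) t + \<alpha> t *\<^sub>R y t) (vderiv y t) (y t))) ** Qmat"
    for t unfolding Z using cross_frame_eq_transpose_inverse[OF ydet[rule_format, of t], of "\<alpha> t"] by simp_all
  have zdet: "det (cols3 (vderiv (vderiv z) t) (vderiv z t) (z t)) = 1" for t
    using frame(1) det_cols3_add_scaled_col3 by metis
  have z_nonzero: "z t \<noteq> 0" for t using zdet[of t] by (auto simp: det_cols3)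
  then have "proj (z t) \<in> proj_image (dual_cone K) \<and> proj (z t) \<in> dual_point K (y t)" for t
    using cross_tangent_in_dual_point[OF K yturn(1)[rule_format] Dy] unfolding z_def by blast
  with z(1,2) z_nonzero zdet frame show ?thesis
    by (intro exI[of _ z]) (simp add: Let_def)
qed

end
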